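(* Among all $(G,\phi,\tau)$ with $G\in\Gamma(F)$, $\phi=(\phi_t,\phi_d)$ with $\phi_d=0$, satisfying (w-P) and (w-HE), the objective $\phi_t+\phi_d(1-G(\tau))$ is maximized by the test-fee structure $(F,\phi)$ with $\phi_d=0$ and $\phi_t=\int_{\mu}^{\overline{\theta}}[s-\mu]\,dF(s)$; that is, this test-fee structure is robustly optimal among all test-fee structures with zero disclosure fee.
   Context: $F$ is a distribution of the asset value with lowest and highest support points $0\le\underline{\theta}<\overline{\theta}<\infty$ and mean $\mu$. $\Gamma(F)$ is the set of CDFs $G$ supported in $[\underline{\theta},\overline{\theta}]$ with $\int_{\underline{\theta}}^xG\le\int_{\underline{\theta}}^xF$ for all $x$ and equality at $x=\overline{\theta}$ (score distributions of unbiased tests). A test-fee structure is $(G,\phi)$ with $G\in\Gamma(F)$ and fees $\phi=(\phi_t,\phi_d)$ (testing, disclosure). (w-P): $\phi_t\le\int_{\mu+\phi_d}^{\overline{\theta}}[s-(\mu+\phi_d)]dG(s)$. (w-HE) for threshold $\tau$: $\tau-\phi_d=E_G[s\mid s\le\tau]$ and $\tau'-\phi_d\ge E_G[s\mid s\le\tau']$ for all $\tau'>\tau$. *)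

theory Defs
  imports "HOL-Probability.Probability"
begin

definition supported_dist :: "real measure \<Rightarrow> real \<Rightarrow> real \<Rightarrow> bool" where
  "supported_dist G lo hi \<longleftrightarrow>
     prob_space G \<and> sets G = sets borel \<and> measure G (- {lo..hi}) = 0"

definition support_bounds :: "real measure \<Rightarrow> real \<Rightarrow> real \<Rightarrow> bool" where
  "support_bounds F lo hi \<longleftrightarrow>
     supported_dist F lo hi \<and>
     (\<forall>e>0. measure F {..<lo + e} > 0) \<and> (\<forall>e>0. measure F {hi - e<..} > 0)"

text \<open>Gamma(F): score distributions of unbiased tests.\<close>
definition GammaF :: "real measure \<Rightarrow> real \<Rightarrow> real \<Rightarrow> real measure set" where
  "GammaF F lo hi = {G. supported_dist G lo hi \<and>
     (\<forall>x. (\<integral>s\<in>{lo..x}. cdf G s \<partial>lborel) \<le> (\<integral>s\<in>{lo..x}. cdf F s \<partial>lborel)) \<and>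
     (\<integral>s\<in>{lo..hi}. cdf G s \<partial>lborel) = (\<integral>s\<in>{lo..hi}. cdf F s \<partial>lborel)}"

text \<open>Conditional mean E_G[s | s \<le> t]; convention: equal to t if G(t) = 0.\<close>
definition cond_mean :: "real measure \<Rightarrow> real \<Rightarrow> real" where
  "cond_mean G t = (if cdf G t = 0 then t
     else (\<integral>s\<in>{..t}. s \<partial>G) / cdf G t)"

definition wP :: "real measure \<Rightarrow> real \<Rightarrow> real \<Rightarrow> real \<Rightarrow> real \<Rightarrow> bool" where
  "wP G mu hi phi_t phi_d \<longleftrightarrow>
     phi_t \<le> (\<integral>s\<in>{mu + phi_d..hi}. (s - (mu + phi_d)) \<partial>G)"

definition wHE :: "real measure \<Rightarrow> real \<Rightarrow> real \<Rightarrow> bool" where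
  "wHE G phi_d t \<longleftrightarrow> t - phi_d = cond_mean G t \<and>
     (\<forall>t'>t. t' - phi_d \<ge> cond_mean G t')"

definition feasible0 :: "real measure \<Rightarrow> real \<Rightarrow> real \<Rightarrow> real measure \<Rightarrow> real \<Rightarrow> real \<Rightarrow> bool" where
  "feasible0 F lo hi G phi_t t \<longleftrightarrow>
     G \<in> GammaF F lo hi \<and> wP G ((\<integral>s. s \<partial>F)) hi phi_t 0 \<and> wHE G 0 t"

definition objective :: "real measure \<Rightarrow> real \<Rightarrow> real \<Rightarrow> real \<Rightarrow> real" where
  "objective G phi_t phi_d t = phi_t + phi_d * (1 - cdf G t)"

end

theory Submission
  imports Defs
begin

text \<open>With zero disclosure fee the objective is the testing fee alone, and (w-P) caps it by the
  expected excess \<open>E\<^sub>G[(s - \<mu>)\<^sup>+]\<close>. By Fubini this excess is \<open>hi - \<mu>\<close> minus the integral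
  of the cdf of \<open>G\<close> over \<open>[\<mu>, hi]\<close>. The constraints defining \<open>\<Gamma>(F)\<close> (equal cdf integrals over
  \<open>[lo, hi]\<close>, dominated ones over \<open>[lo, \<mu>]\<close>) make the integral over \<open>[\<mu>, hi]\<close> at least the
  one for \<open>F\<close>, so the fee is largest for \<open>G = F\<close>. The fully informative test is feasible with
  threshold \<open>lo\<close>, because \<open>E\<^sub>F[s | s \<le> lo] = lo\<close> and \<open>E\<^sub>F[s | s \<le> t] \<le> t\<close> for every \<open>t\<close>.\<close>

lemma supported_dist_real_distribution:
  "supported_dist G lo hi \<Longrightarrow> real_distribution G"
  unfolding supported_dist_def real_distribution_def real_distribution_axioms_def by auto

lemma supported_dist_AE_mem:
  assumes "supported_dist G lo hi"
  shows "AE s in G. s \<in> {lo..hi}"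
proof -
  interpret real_distribution G
    using assms by (rule supported_dist_real_distribution)
  have "- {lo..hi} \<in> null_sets G"
    using assms by (simp add: supported_dist_def null_sets_def emeasure_eq_measure)
  then show ?thesis
    by (rule AE_I') auto
qed

lemma supported_dist_integrable:
  fixes f :: "real \<Rightarrow> real"
  assumes "supported_dist G lo hi" and "f \<in> borel_measurable borel"
    and "\<And>s. s \<in> {lo..hi} \<Longrightarrow> \<bar>f s\<bar> \<le> B"
  shows "integrable G f"
proof -
  interpret real_distribution G
    using assms(1) by (rule supported_dist_real_distribution)
  show ?thesis
  proof (rule integrable_const_bound)
    show "AE s in G. norm (f s) \<le> B"
      using supported_dist_AE_mem[OF assms(1)] by eventually_elim (simp add: assms(3))
  qed (use assms(2) in simp)
qed

lemma (in finite_borel_measure) borel_measurable_cdf: "cdf M \<in> borel_measurable borel"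
  by (intro borel_measurable_mono monoI cdf_nondecreasing)

lemma (in finite_borel_measure) set_integrable_cdf:
  assumes "A \<in> sets lborel" and "emeasure lborel A < \<infinity>"
  shows "set_integrable lborel A (cdf M)"
  unfolding set_integrable_def
proof (rule integrableI_bounded_set[where B = "measure M (space M)"])
  show "AE x in lborel. x \<in> A \<longrightarrow> norm (indicator A x *\<^sub>R cdf M x) \<le> measure M (space M)"
    by (intro AE_I2) (simp add: cdf_nonneg cdf_bounded)
qed (use assms borel_measurable_cdf in auto)

lemma (in real_distribution) emeasure_greaterThan_eq_cdf:
  "emeasure M {u<..} = ennreal (1 - cdf M u)"
proof -
  have "{u<..} = space M - {..u}"
    by auto
  then have "prob {u<..} = 1 - prob {..u}"
    by (metis prob_compl atMost_borel events_eq_borel)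
  then show ?thesis
    by (simp add: emeasure_eq_measure cdf_def)
qed

lemma emeasure_lborel_Ioc_inter_lessThan:
  fixes m hi s :: real
  assumes "s \<le> hi"
  shows "emeasure lborel ({m<..hi} \<inter> {..<s}) = ennreal (indicator {m..hi} s * (s - m))"
proof (cases "m \<le> s")
  case True
  then have "{m<..hi} \<inter> {..<s} = {m<..<s}" using assms by auto
  then show ?thesis using True assms by (simp add: indicator_def)
next
  case False
  then have "{m<..hi} \<inter> {..<s} = {}" by auto
  then show ?thesis using False by (simp add: indicator_def)
qed

lemma (in real_distribution) nn_integral_excess_eq_tail:
  assumes "AE s in M. s \<le> hi"
  shows "(\<integral>\<^sup>+ s. ennreal (indicator {m..hi} s * (s - m)) \<partial>M)
       = (\<integral>\<^sup>+ u. ennreal (indicator {m<..hi} u * (1 - cdf M u)) \<partial>lborel)"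
proof -
  \<comment> \<open>For \<open>s \<le> hi\<close>, the excess \<open>(s - m)\<^sup>+\<close> is the length of \<open>{u. m < u \<le> hi, u < s}\<close>;
    integrating in the other order turns it into the tail \<open>1 - cdf M u\<close>.\<close>
  define k :: "real \<Rightarrow> real \<Rightarrow> ennreal"
    where "k s u = indicator {m<..hi} u * (if u < s then 1 else 0)" for s u
  interpret pair_sigma_finite M lborel
    by (simp add: pair_sigma_finite_def prob_space_imp_sigma_finite prob_space_axioms
        lborel.sigma_finite_measure_axioms)
  have k_measurable: "case_prod k \<in> borel_measurable (M \<Otimes>\<^sub>M lborel)"
    unfolding k_def by measurable
  have "(\<integral>\<^sup>+ u. k s u \<partial>lborel) = ennreal (indicator {m..hi} s * (s - m))" if "s \<le> hi" for s
  proof -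
    have "(\<integral>\<^sup>+ u. k s u \<partial>lborel) = (\<integral>\<^sup>+ u. indicator ({m<..hi} \<inter> {..<s}) u \<partial>lborel)"
      unfolding k_def by (intro nn_integral_cong) (simp add: indicator_def)
    also have "\<dots> = ennreal (indicator {m..hi} s * (s - m))"
      using emeasure_lborel_Ioc_inter_lessThan[OF that] by simp
    finally show ?thesis .
  qed
  then have "(\<integral>\<^sup>+ s. ennreal (indicator {m..hi} s * (s - m)) \<partial>M) = (\<integral>\<^sup>+ s. (\<integral>\<^sup>+ u. k s u \<partial>lborel) \<partial>M)"
    using assms by (intro nn_integral_cong_AE) (auto elim: eventually_mono)
  also have "\<dots> = (\<integral>\<^sup>+ u. (\<integral>\<^sup>+ s. k s u \<partial>M) \<partial>lborel)"
    using k_measurable by (rule Fubini'[symmetric])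
  also have "\<dots> = (\<integral>\<^sup>+ u. ennreal (indicator {m<..hi} u * (1 - cdf M u)) \<partial>lborel)"
  proof (intro nn_integral_cong)
    fix u
    have "(\<integral>\<^sup>+ s. k s u \<partial>M) = (\<integral>\<^sup>+ s. indicator {m<..hi} u * indicator {u<..} s \<partial>M)"
      unfolding k_def by (intro nn_integral_cong) (simp add: indicator_def)
    also have "\<dots> = indicator {m<..hi} u * emeasure M {u<..}"
      by (simp add: nn_integral_cmult)
    finally show "(\<integral>\<^sup>+ s. k s u \<partial>M) = ennreal (indicator {m<..hi} u * (1 - cdf M u))"
      by (simp add: emeasure_greaterThan_eq_cdf cdf_bounded_prob ennreal_mult indicator_def)
  qed
  finally show ?thesis .
qed

lemma (in real_distribution) set_integral_excess_eq_cdf: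
  assumes "AE s in M. s \<le> hi" and "m \<le> hi"
  shows "(\<integral>s\<in>{m..hi}. (s - m) \<partial>M) = (hi - m) - (\<integral>u\<in>{m<..hi}. cdf M u \<partial>lborel)"
proof -
  note borel_measurable_cdf[measurable]
  have "(\<integral>s. indicator {m..hi} s * (s - m) \<partial>M)
      = (\<integral>u. indicator {m<..hi} u * (1 - cdf M u) \<partial>lborel)"
    using nn_integral_excess_eq_tail[OF assms(1), of m]
    by (subst (1 2) integral_eq_nn_integral) (auto simp: indicator_def cdf_bounded_prob)
  also have "\<dots> = (\<integral>u. indicator {m<..hi} u \<partial>lborel) - (\<integral>u. indicator {m<..hi} u * cdf M u \<partial>lborel)"
    using set_integrable_cdf[of "{m<..hi}"] assms(2)
    by (subst Bochner_Integration.integral_diff[symmetric])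
      (auto simp: set_integrable_def algebra_simps)
  finally show ?thesis
    using assms(2) by (simp add: set_lebesgue_integral_def)
qed

lemma supported_dist_excess_eq_cdf_integrals:
  assumes "supported_dist G lo hi" and "lo \<le> m" and "m \<le> hi"
  shows "(\<integral>s\<in>{m..hi}. (s - m) \<partial>G)
       = (hi - m) - ((\<integral>s\<in>{lo..hi}. cdf G s \<partial>lborel) - (\<integral>s\<in>{lo..m}. cdf G s \<partial>lborel))"
proof -
  interpret real_distribution G
    using assms(1) by (rule supported_dist_real_distribution)
  have "{lo..hi} = {lo..m} \<union> {m<..hi}"
    using assms(2,3) by auto
  then have "(\<integral>s\<in>{lo..hi}. cdf G s \<partial>lborel)
      = (\<integral>s\<in>{lo..m}. cdf G s \<partial>lborel) + (\<integral>s\<in>{m<..hi}. cdf G s \<partial>lborel)"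
    using assms(2,3)
    by (simp only:) (rule set_integral_Un[OF ivl_disj_int_two(8)]; auto intro!: set_integrable_cdf)
  moreover have "AE s in G. s \<le> hi"
    using supported_dist_AE_mem[OF assms(1)] by eventually_elim simp
  ultimately show ?thesis
    using set_integral_excess_eq_cdf[OF _ assms(3)] by simp
qed

lemma GammaF_excess_le:
  assumes "G \<in> GammaF F lo hi" and "supported_dist F lo hi" and "lo \<le> m" and "m \<le> hi"
  shows "(\<integral>s\<in>{m..hi}. (s - m) \<partial>G) \<le> (\<integral>s\<in>{m..hi}. (s - m) \<partial>F)"
  using assms supported_dist_excess_eq_cdf_integrals[of G lo hi m]
    supported_dist_excess_eq_cdf_integrals[of F lo hi m]
  unfolding GammaF_def by fastforce

lemma supported_dist_mean_mem:
  assumes "supported_dist F lo hi"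
  shows "(\<integral>s. s \<partial>F) \<in> {lo..hi}"
proof -
  interpret real_distribution F
    using assms by (rule supported_dist_real_distribution)
  have "integrable F (\<lambda>s. s)"
    using assms by (rule supported_dist_integrable[where B = "\<bar>lo\<bar> + \<bar>hi\<bar>"]) auto
  then show ?thesis
    using supported_dist_AE_mem[OF assms]
    by (auto intro: integral_ge_const integral_le_const elim: eventually_mono)
qed

lemma supported_dist_cond_mean_le:
  assumes "supported_dist G lo hi"
  shows "cond_mean G t \<le> t"
proof (cases "cdf G t = 0")
  case False
  interpret real_distribution G
    using assms by (rule supported_dist_real_distribution)
  have "(\<integral>s\<in>{..t}. s \<partial>G) \<le> (\<integral>s. indicator {..t} s * t \<partial>G)"
    unfolding set_lebesgue_integral_def
  proof (rule integral_mono)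
    show "integrable G (\<lambda>s. indicator {..t} s *\<^sub>R s)"
      using assms by (rule supported_dist_integrable[where B = "\<bar>lo\<bar> + \<bar>hi\<bar>"])
        (auto simp: indicator_def)
    show "integrable G (\<lambda>s. indicator {..t} s * t)"
      using assms by (rule supported_dist_integrable[where B = "\<bar>t\<bar>"]) (auto simp: indicator_def)
  qed (auto simp: indicator_def)
  also have "\<dots> = t * cdf G t"
    by (simp add: cdf_def)
  finally show ?thesis
    using False cdf_nonneg[of t] by (simp add: cond_mean_def pos_divide_le_eq)
qed (simp add: cond_mean_def)

lemma supported_dist_cond_mean_lower_bound:
  assumes "supported_dist G lo hi"
  shows "cond_mean G lo = lo"
proof (cases "cdf G lo = 0")
  case False
  interpret real_distribution G
    using assms by (rule supported_dist_real_distribution)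
  have "(\<integral>s\<in>{..lo}. s \<partial>G) = (\<integral>s. indicator {..lo} s * lo \<partial>G)"
    unfolding set_lebesgue_integral_def using supported_dist_AE_mem[OF assms]
    by (intro integral_cong_AE) (auto elim: eventually_mono simp: indicator_def)
  also have "\<dots> = lo * cdf G lo"
    by (simp add: cdf_def)
  finally show ?thesis
    using False by (simp add: cond_mean_def)
qed (simp add: cond_mean_def)

lemma feasible0_self:
  assumes "supported_dist F lo hi"
  shows "feasible0 F lo hi F (\<integral>s\<in>{(\<integral>s. s \<partial>F)..hi}. (s - (\<integral>s. s \<partial>F)) \<partial>F) lo"
  using assms supported_dist_cond_mean_le[OF assms] supported_dist_cond_mean_lower_bound[OF assms]
  unfolding feasible0_def GammaF_def wP_def wHE_def by auto

theorem lemma10: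
  fixes F :: "real measure" and lo hi :: real
  assumes "0 \<le> lo" and "lo < hi"
    and "support_bounds F lo hi"
  shows "\<exists>t0. feasible0 F lo hi F (\<integral>s\<in>{(\<integral>s. s \<partial>F)..hi}. (s - (\<integral>s. s \<partial>F)) \<partial>F) t0 \<and>
    (\<forall>G phi_t t. feasible0 F lo hi G phi_t t \<longrightarrow>
       objective G phi_t 0 t \<le>
       objective F (\<integral>s\<in>{(\<integral>s. s \<partial>F)..hi}. (s - (\<integral>s. s \<partial>F)) \<partial>F) 0 t0)"
proof (intro exI[of _ lo] conjI allI impI)
  define mu where "mu = (\<integral>s. s \<partial>F)"
  have F: "supported_dist F lo hi"
    using assms(3) by (simp add: support_bounds_def)
  then show "feasible0 F lo hi F (\<integral>s\<in>{(\<integral>s. s \<partial>F)..hi}. (s - (\<integral>s. s \<partial>F)) \<partial>F) lo"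
    by (rule feasible0_self)
  fix G phi_t t
  assume "feasible0 F lo hi G phi_t t"
  then have "G \<in> GammaF F lo hi" and "phi_t \<le> (\<integral>s\<in>{mu..hi}. (s - mu) \<partial>G)"
    by (simp_all add: feasible0_def wP_def mu_def)
  moreover have "mu \<in> {lo..hi}"
    unfolding mu_def using F by (rule supported_dist_mean_mem)
  ultimately have "phi_t \<le> (\<integral>s\<in>{mu..hi}. (s - mu) \<partial>F)"
    using GammaF_excess_le[OF _ F] by fastforce
  then show "objective G phi_t 0 t \<le> objective F (\<integral>s\<in>{(\<integral>s. s \<partial>F)..hi}. (s - (\<integral>s. s \<partial>F)) \<partial>F) 0 lo"
    by (simp add: objective_def mu_def)
qed

end
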